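(* Let $x\in S\setminus W$ and $y\in S\setminus(W\cup\{x\})$. For each $\lambda\ge0$, the Perron roots $\rho(D(\lambda))$, $\rho(D(x;\lambda))$ and $\rho(D(x,y;\lambda))$ are simultaneously greater than $1$, equal to $1$, or less than $1$.
   Context: CBP setting. $S$ finite or countable; $\eta$ irreducible continuous-time Markov chain on $S$ with conservative infinitesimal matrix $Q=(q(x,y))$ ($q(x,y)\ge0$ for $x\ne y$, $q(x,x)\in(-\infty,0)$, row sums $0$). Distinct catalysts $W=\{w_1,\dots,w_N\}\subset S$; for $k\le N$, $\beta_k>0$, $\alpha_k\in[0,1)$, and $f_k$ the generating function of a nonnegative integer random variable with $f_k'(1)<\infty$. Hitting times under taboo: for $u,v\in S$, $H\subset S$, ${}_H\overline\tau_{u,v}$ is the time spent by $\eta$ started at $u$, after leaving $u$, until the first hitting of $v$ if $H$ is not visited before; otherwise $\infty$. ${}_H\overline F_{u,v}$ is its improper distribution function and ${}_H\overline F^*_{u,v}(\lambda)=\int_{0-}^\infty e^{-\lambda t}d\,{}_H\overline F_{u,v}(t)$, $\lambda\ge0$. For a finite set $V=\{v_1,\dots,v_n\}\subset S$ of distinct points with parameters $\alpha_i,\beta_i,f_i$ attached, define the $n\times n$ matrix $D_V(\lambda)$ with entries $\delta_{i,j}\alpha_if_i'(1)G_i^*(\lambda)+(1-\alpha_i)G_i^*(\lambda)\,{}_{V\setminus\{v_j\}}\overline F^*_{v_i,v_j}(\lambda)$. Then $D(\lambda)=D_W(\lambda)$ with $G_i^*(\lambda)=\beta_i/(\lambda+\beta_i)$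 for $i\le N$. Set $w_{N+1}=x$, $w_{N+2}=y$, $\alpha_{N+1}=\alpha_{N+2}=0$, $f'_{N+1}(1)=f'_{N+2}(1)=0$, $G_{N+1}^*(\lambda)=-q(x,x)/(\lambda-q(x,x))$, $G^*_{N+2}(\lambda)=-q(y,y)/(\lambda-q(y,y))$; $D(x;\lambda)=D_{W\cup\{x\}}(\lambda)$ (size $N+1$) and $D(x,y;\lambda)=D_{W\cup\{x,y\}}(\lambda)$ (size $N+2$). $\rho(A)$ denotes the Perron root of an irreducible nonnegative matrix $A$. *)

theory Defs
  imports "HOL-Probability.Probability" "Jordan_Normal_Form.Spectral_Radius"
begin

definition conservative_Q :: "('s \<Rightarrow> 's \<Rightarrow> real) \<Rightarrow> bool" where
  "conservative_Q q \<longleftrightarrow>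
     (\<forall>a b. a \<noteq> b \<longrightarrow> q a b \<ge> 0) \<and> (\<forall>a. q a a < 0) \<and>
     (\<forall>a. ((\<lambda>b. q a b) has_sum 0) UNIV)"

definition irreducible_Q :: "('s \<Rightarrow> 's \<Rightarrow> real) \<Rightarrow> bool" where
  "irreducible_Q q \<longleftrightarrow> (\<forall>a b. (a, b) \<in> {(c, d). c \<noteq> d \<and> q c d > 0}\<^sup>*)"

definition jump_prob :: "('s \<Rightarrow> 's \<Rightarrow> real) \<Rightarrow> 's \<Rightarrow> 's \<Rightarrow> real" where
  "jump_prob q a b = (if a = b then 0 else q a b / (- q a a))"

text \<open>Contribution of the jump path u, z_1, ..., z_(k-1), v (zs = [z_1,...,z_(k-1)]) to the
  Laplace transform of the time spent after leaving u until hitting v: the product of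
  the jump probabilities times the Laplace transforms -q(z,z)/(lam - q(z,z)) of the
  exponential holding times in the intermediate states.\<close>
definition path_weight :: "('s \<Rightarrow> 's \<Rightarrow> real) \<Rightarrow> 's \<Rightarrow> 's list \<Rightarrow> 's \<Rightarrow> real \<Rightarrow> real" where
  "path_weight q u zs v lam =
     (let p = u # zs @ [v] in
       (\<Prod>i<length p - 1. jump_prob q (p ! i) (p ! Suc i)) *
       (\<Prod>z\<leftarrow>zs. (- q z z) / (lam - q z z)))"

text \<open>Laplace--Stieltjes transform of the improper distribution of the taboo hitting time
  H-tau_{u,v}:  E_u[exp(-lam * tau); tau < infinity], where tau is the time spent after
  leaving u until the first hit of v, and tau = infinity if H is visited (after leaving u)
  before v.  Computed via the jump-hold description of the (minimal) chain.\<close>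
definition taboo_Fstar :: "('s::countable \<Rightarrow> 's \<Rightarrow> real) \<Rightarrow> 's set \<Rightarrow> 's \<Rightarrow> 's \<Rightarrow> real \<Rightarrow> real" where
  "taboo_Fstar q H u v lam =
     enn2real (\<integral>\<^sup>+ zs. ennreal (path_weight q u zs v lam)
                 \<partial>count_space {zs. \<forall>z\<in>set zs. z \<notin> H \<and> z \<noteq> v})"

text \<open>D_V(lam) for V = {v 0, ..., v (n-1)} (0-based indices), with parameters
  alpha i, mean offspring m i = f_i'(1) and transforms G i lam.\<close>
definition D_mat :: "('s::countable \<Rightarrow> 's \<Rightarrow> real) \<Rightarrow> nat \<Rightarrow> (nat \<Rightarrow> 's) \<Rightarrow> (nat \<Rightarrow> real)
     \<Rightarrow> (nat \<Rightarrow> real) \<Rightarrow> (nat \<Rightarrow> real \<Rightarrow> real) \<Rightarrow> real \<Rightarrow> real mat" where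
  "D_mat q n v alpha m G lam =
     mat n n (\<lambda>(i, j). (if i = j then alpha i * m i * G i lam else 0)
        + (1 - alpha i) * G i lam * taboo_Fstar q (v ` {..<n} - {v j}) (v i) (v j) lam)"

text \<open>Generating-function derivative at 1 = mean of the offspring law.\<close>
definition gf_deriv1 :: "nat pmf \<Rightarrow> real" where
  "gf_deriv1 p = measure_pmf.expectation p real"

definition perron_root :: "real mat \<Rightarrow> real" where
  "perron_root A = spectral_radius (map_mat complex_of_real A)"

end

theory Submission
  imports Defs
begin

text \<open>Let \<open>z\<close> be a state outside the finite set \<open>V\<close>, attached with \<open>\<alpha> = 0\<close> and the Laplace
  transform \<open>g(z)\<close> of its holding time. Cutting the jump paths from \<open>v\<^sub>i\<close> to \<open>v\<^sub>j\<close> that avoid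
  \<open>V - {v\<^sub>j}\<close> at their first visit to \<open>z\<close> gives
  \<open>F\<^sub>V(u,v) = F\<^sub>V\<^sub>+\<^sub>z(u,v) + F\<^sub>V\<^sub>+\<^sub>z(u,z) g(z) F\<^sub>V(z,v)\<close>; solving this at \<open>u = z\<close> shows
  that \<open>D\<^sub>V\<close> is the stochastic complement of \<open>D\<^sub>V\<^sub>+\<^sub>z\<close> at \<open>z\<close>. Its pivot
  \<open>g(z) F\<^sub>V\<^sub>+\<^sub>z(z,z)\<close> is the weight of returning to \<open>z\<close> before reaching \<open>V\<close>, which is
  below 1 by irreducibility.

  For a nonnegative matrix with pivot below 1, the Collatz--Wielandt characterisation
  \<open>\<rho>(A) < r \<longleftrightarrow> A u < r u\<close> for some \<open>u > 0\<close> transfers subinvariant vectors between the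
  matrix and its stochastic complement, so both have Perron root below 1, or both at most 1,
  simultaneously. Adding first \<open>x\<close> and then \<open>y\<close> to \<open>W\<close> gives the theorem.\<close>

section \<open>Nonnegative matrices and subinvariant vectors\<close>

definition nonneg_mat :: "real mat \<Rightarrow> bool" where
  "nonneg_mat A \<longleftrightarrow> (\<forall>i<dim_row A. \<forall>j<dim_col A. 0 \<le> A $$ (i,j))"

definition strictly_subinvariant :: "real mat \<Rightarrow> real \<Rightarrow> (nat \<Rightarrow> real) \<Rightarrow> bool" where
  "strictly_subinvariant A r u \<longleftrightarrow>
     (\<forall>i<dim_row A. 0 < u i \<and> (\<Sum>j<dim_col A. A $$ (i,j) * u j) < r * u i)"

lemma nonneg_matD:
  "A \<in> carrier_mat n n \<Longrightarrow> nonneg_mat A \<Longrightarrow> i < n \<Longrightarrow> j < n \<Longrightarrow> 0 \<le> A $$ (i,j)"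
  unfolding nonneg_mat_def by auto

lemma strictly_subinvariantD:
  assumes "A \<in> carrier_mat n n" "strictly_subinvariant A r u" "i < n"
  shows "0 < u i" "(\<Sum>j<n. A $$ (i,j) * u j) < r * u i"
  using assms unfolding strictly_subinvariant_def by auto

lemma index_mult_mat_lessThan:
  fixes A B :: "'a::comm_semiring_0 mat"
  assumes "A \<in> carrier_mat n n" "B \<in> carrier_mat n n" "i < n" "j < n"
  shows "(A * B) $$ (i,j) = (\<Sum>l<n. A $$ (i,l) * B $$ (l,j))"
  using assms by (simp add: scalar_prod_def lessThan_atLeast0)

lemma pow_mat_Suc_left:
  fixes A :: "'a::semiring_1 mat"
  assumes A: "A \<in> carrier_mat n n"
  shows "A ^\<^sub>m Suc k = A * A ^\<^sub>m k"
proof (induct k)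
  case 0 show ?case using A by simp
next
  case (Suc k)
  have "A ^\<^sub>m Suc (Suc k) = (A * A ^\<^sub>m k) * A" using Suc by simp
  also have "\<dots> = A * (A ^\<^sub>m k * A)" using A by (simp add: assoc_mult_mat[of _ n n _ n _ n])
  finally show ?case by simp
qed

lemma pow_mat_smult:
  fixes B :: "'a::comm_ring_1 mat"
  assumes B: "B \<in> carrier_mat n n"
  shows "(c \<cdot>\<^sub>m B) ^\<^sub>m k = (c ^ k) \<cdot>\<^sub>m (B ^\<^sub>m k)"
proof (induct k)
  case 0 show ?case using B by (intro eq_matI) auto
next
  case (Suc k)
  have "(c \<cdot>\<^sub>m B) ^\<^sub>m Suc k = ((c ^ k) \<cdot>\<^sub>m (B ^\<^sub>m k)) * (c \<cdot>\<^sub>m B)" using Suc by simp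
  also have "\<dots> = (c ^ Suc k) \<cdot>\<^sub>m (B ^\<^sub>m Suc k)"
    using B by (intro eq_matI) (auto simp: scalar_prod_def sum_distrib_left algebra_simps)
  finally show ?case .
qed

lemma nonneg_mat_pow:
  assumes A: "A \<in> carrier_mat n n" and nn: "nonneg_mat A"
  shows "nonneg_mat (A ^\<^sub>m k)"
proof (induct k)
  case 0 show ?case using A by (auto simp: nonneg_mat_def)
next
  case (Suc k)
  have "0 \<le> (A ^\<^sub>m Suc k) $$ (i, j)" if "i < n" "j < n" for i j
    unfolding pow_mat.simps index_mult_mat_lessThan[OF pow_carrier_mat[OF A] A that]
    using Suc that nonneg_matD[OF A nn] nonneg_matD[OF pow_carrier_mat[OF A]]
    by (intro sum_nonneg mult_nonneg_nonneg) auto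
  then show ?case using A by (simp add: nonneg_mat_def)
qed

lemma weighted_row_sums_pow_le:
  fixes A :: "real mat"
  assumes A: "A \<in> carrier_mat n n" and nn: "nonneg_mat A" and t: "0 \<le> t"
    and le: "\<And>i. i < n \<Longrightarrow> (\<Sum>j<n. A $$ (i,j) * u j) \<le> t * u i"
    and i: "i < n"
  shows "(\<Sum>j<n. (A ^\<^sub>m k) $$ (i,j) * u j) \<le> t ^ k * u i"
  using i
proof (induct k arbitrary: i)
  case 0
  have "(\<Sum>j<n. (A ^\<^sub>m 0) $$ (i,j) * u j) = (\<Sum>j<n. if i = j then u j else 0)"
    using A 0 by (intro sum.cong) auto
  then show ?case using 0 by simp
next
  case (Suc k)
  let ?P = "A ^\<^sub>m k"
  have P: "?P \<in> carrier_mat n n" using A by simp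
  have "(\<Sum>j<n. (A ^\<^sub>m Suc k) $$ (i,j) * u j) = (\<Sum>j<n. \<Sum>l<n. ?P $$ (i,l) * A $$ (l,j) * u j)"
    using index_mult_mat_lessThan[OF P A Suc.prems] by (simp add: sum_distrib_right)
  also have "\<dots> = (\<Sum>l<n. ?P $$ (i,l) * (\<Sum>j<n. A $$ (l,j) * u j))"
    by (subst sum.swap) (simp add: sum_distrib_left mult.assoc)
  also have "\<dots> \<le> (\<Sum>l<n. ?P $$ (i,l) * (t * u l))"
    using nonneg_matD[OF P nonneg_mat_pow[OF A nn]] le Suc.prems
    by (intro sum_mono mult_left_mono) auto
  also have "\<dots> = t * (\<Sum>l<n. ?P $$ (i,l) * u l)"
    by (simp add: sum_distrib_left algebra_simps)
  also have "\<dots> \<le> t * (t ^ k * u i)" using Suc t by (intro mult_left_mono) auto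
  finally show ?case by simp
qed

lemma perron_root_mem:
  assumes "A \<in> carrier_mat n n" "0 < n"
  shows "perron_root A \<in> norm ` spectrum (map_mat complex_of_real A)"
  unfolding perron_root_def by (rule spectral_radius_mem_max(1)) (use assms in auto)

lemma le_if_power_bounded:
  fixes a t c C :: real
  assumes t: "0 \<le> t" and c: "0 < c" and bound: "\<And>k. a ^ k * c \<le> C * t ^ k"
  shows "a \<le> t"
proof (rule ccontr)
  assume "\<not> a \<le> t"
  then have ta: "t < a" by simp
  then have "(\<lambda>k. C * (t / a) ^ k) \<longlonglongrightarrow> 0"
    using t by (intro tendsto_mult_right_zero LIMSEQ_power_zero) auto
  from order_tendstoD(2)[OF this c] obtain k where "C * (t / a) ^ k < c"
    by (auto simp: eventually_sequentially)
  moreover have "0 < a ^ k" using t ta by simp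
  ultimately have "C * t ^ k < c * a ^ k" by (simp add: power_divide field_simps)
  with bound[of k] show False by (simp add: mult.commute)
qed

text \<open>Iterating \<open>A\<close> on an eigenvector for the Perron root, its entries stay dominated by
  \<open>t\<^sup>k u\<close>.\<close>
lemma perron_root_le_if_weighted_row_sums_le:
  fixes A :: "real mat"
  assumes A: "A \<in> carrier_mat n n" and n: "0 < n" and nn: "nonneg_mat A" and t: "0 \<le> t"
    and u: "\<And>i. i < n \<Longrightarrow> 0 < u i"
    and le: "\<And>i. i < n \<Longrightarrow> (\<Sum>j<n. A $$ (i,j) * u j) \<le> t * u i"
  shows "perron_root A \<le> t"
proof -
  let ?B = "map_mat complex_of_real A"
  have B: "?B \<in> carrier_mat n n" using A by simp
  obtain mu where mu: "mu \<in> spectrum ?B" and eq: "perron_root A = norm mu"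
    using perron_root_mem[OF A n] by auto
  from mu obtain v where ev: "eigenvector ?B v mu" unfolding spectrum_def eigenvalue_def by auto
  then have v: "v \<in> carrier_vec n" "v \<noteq> 0\<^sub>v n" "?B *\<^sub>v v = mu \<cdot>\<^sub>v v"
    unfolding eigenvector_def using A by auto
  from v obtain i where i: "i < n" "v $ i \<noteq> 0" by (metis eq_vecI index_zero_vec carrier_vecD)
  define K where "K = Max ((\<lambda>j. norm (v $ j) / u j) ` {..<n})"
  have vK: "norm (v $ j) \<le> K * u j" if "j < n" for j
  proof -
    have "norm (v $ j) / u j \<le> K" unfolding K_def using that by (intro Max_ge) auto
    then show ?thesis using u that by (simp add: divide_le_eq)
  qed
  have K0: "0 \<le> K"
    using order_trans[OF norm_ge_zero vK[OF i(1)]] u[OF i(1)] by (simp add: zero_le_mult_iff)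
  have power_bound: "norm mu ^ k * norm (v $ i) \<le> (K * u i) * t ^ k" for k
  proof -
    have Ak: "0 \<le> (A ^\<^sub>m k) $$ (i,j)" if "j < n" for j
      using nonneg_matD[OF pow_carrier_mat[OF A] nonneg_mat_pow[OF A nn]] i that by auto
    have "(?B ^\<^sub>m k *\<^sub>v v) $ i = mu ^ k * v $ i"
      using eigenvector_pow[OF B ev] i v by simp
    moreover have "(?B ^\<^sub>m k *\<^sub>v v) $ i = (\<Sum>j<n. complex_of_real ((A ^\<^sub>m k) $$ (i,j)) * v $ j)"
      unfolding of_real_hom.mat_hom_pow[OF A, of k, symmetric]
      using i v A by (simp add: scalar_prod_def lessThan_atLeast0)
    ultimately have "norm mu ^ k * norm (v $ i)
        = norm (\<Sum>j<n. complex_of_real ((A ^\<^sub>m k) $$ (i,j)) * v $ j)"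
      by (simp add: norm_mult norm_power)
    also have "\<dots> \<le> (\<Sum>j<n. (A ^\<^sub>m k) $$ (i,j) * norm (v $ j))"
      by (rule order_trans[OF norm_sum]) (use Ak in \<open>simp add: norm_mult\<close>)
    also have "\<dots> \<le> (\<Sum>j<n. (A ^\<^sub>m k) $$ (i,j) * (K * u j))"
      using Ak vK by (intro sum_mono mult_left_mono) auto
    also have "\<dots> = K * (\<Sum>j<n. (A ^\<^sub>m k) $$ (i,j) * u j)"
      by (simp add: sum_distrib_left algebra_simps)
    also have "\<dots> \<le> K * (t ^ k * u i)"
      using weighted_row_sums_pow_le[OF A nn t le i(1)] K0 by (intro mult_left_mono)
    finally show ?thesis by (simp add: algebra_simps)
  qed
  have "norm mu \<le> t" using i(2) by (intro le_if_power_bounded[OF t _ power_bound]) simp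
  then show ?thesis using eq by simp
qed

lemma perron_root_nonneg:
  assumes "A \<in> carrier_mat n n" "0 < n"
  shows "0 \<le> perron_root A"
  using perron_root_mem[OF assms] by auto

lemma perron_root_less_if_subinvariant:
  fixes A :: "real mat"
  assumes A: "A \<in> carrier_mat n n" and n: "0 < n" and nn: "nonneg_mat A"
    and sub: "strictly_subinvariant A r u"
  shows "perron_root A < r"
proof -
  note u = strictly_subinvariantD[OF A sub]
  define t where "t = Max ((\<lambda>i. (\<Sum>j<n. A $$ (i,j) * u j) / u i) ` {..<n})"
  have "t \<in> (\<lambda>i. (\<Sum>j<n. A $$ (i,j) * u j) / u i) ` {..<n}"
    unfolding t_def using n by (intro Max_in) auto
  then obtain i where i: "i < n" and ti: "t = (\<Sum>j<n. A $$ (i,j) * u j) / u i" by auto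
  have "0 \<le> t" unfolding ti
    using nonneg_matD[OF A nn i] u(1)[THEN less_imp_le] u(1)[OF i]
    by (intro divide_nonneg_pos sum_nonneg mult_nonneg_nonneg) auto
  moreover have "t < r" unfolding ti using u i by (simp add: divide_less_eq)
  moreover have "(\<Sum>j<n. A $$ (l,j) * u j) \<le> t * u l" if "l < n" for l
  proof -
    have "(\<Sum>j<n. A $$ (l,j) * u j) / u l \<le> t" unfolding t_def using that by (intro Max_ge) auto
    then show ?thesis using u(1)[OF that] by (simp add: divide_le_eq)
  qed
  ultimately show ?thesis
    using perron_root_le_if_weighted_row_sums_le[OF A n nn, of t u] u(1) by fastforce
qed

lemma mat_pow_entries_le_if_perron_root_less:
  fixes A :: "real mat"
  assumes A: "A \<in> carrier_mat n n" and n: "0 < n" and s: "perron_root A < s"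
  obtains c where "\<And>k i j. i < n \<Longrightarrow> j < n \<Longrightarrow> (A ^\<^sub>m k) $$ (i,j) \<le> c * s ^ k"
proof -
  let ?B = "map_mat complex_of_real A"
  have B: "?B \<in> carrier_mat n n" using A by simp
  have s0: "0 < s" using perron_root_nonneg[OF A n] s by simp
  define C where "C = complex_of_real (1 / s) \<cdot>\<^sub>m ?B"
  have C: "C \<in> carrier_mat n n" using A unfolding C_def by simp
  have "spectral_radius C < 1"
  proof -
    obtain nu where nu: "nu \<in> spectrum C" "spectral_radius C = norm nu"
      using spectral_radius_mem_max(1)[OF C n] by auto
    from nu obtain v where ev: "eigenvector C v nu" unfolding spectrum_def eigenvalue_def by auto
    then have v: "v \<in> carrier_vec n" "v \<noteq> 0\<^sub>v n" "C *\<^sub>v v = nu \<cdot>\<^sub>v v"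
      using C by (auto simp: eigenvector_def)
    have "?B *\<^sub>v v = (complex_of_real s * nu) \<cdot>\<^sub>v v"
    proof (rule eq_vecI)
      fix i assume "i < dim_vec ((complex_of_real s * nu) \<cdot>\<^sub>v v)"
      then have i: "i < n" using v by simp
      have "(C *\<^sub>v v) $ i = (nu \<cdot>\<^sub>v v) $ i" using v by simp
      then have "complex_of_real (1 / s) * (row ?B i \<bullet> v) = nu * v $ i"
        using i v A unfolding C_def by (simp add: scalar_prod_def sum_distrib_left algebra_simps)
      then have "row ?B i \<bullet> v = complex_of_real s * nu * v $ i" using s0 by (simp add: field_simps)
      then show "(?B *\<^sub>v v) $ i = ((complex_of_real s * nu) \<cdot>\<^sub>v v) $ i" using i v A by simp
    qed (use v A in simp)
    then have "complex_of_real s * nu \<in> spectrum ?B"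
      using v A unfolding spectrum_def eigenvalue_def eigenvector_def by auto
    then have "norm (complex_of_real s * nu) \<le> perron_root A"
      unfolding perron_root_def by (intro spectral_radius_mem_max(2)[OF B n]) auto
    then have "s * norm nu \<le> perron_root A" using s0 by (simp add: norm_mult)
    then have "s * norm nu < s * 1" using s by linarith
    then show ?thesis using nu s0 mult_less_cancel_left_pos[of s "norm nu" 1] by simp
  qed
  then obtain c where c: "\<And>k. norm_bound (C ^\<^sub>m k) c"
    using spectral_radius_jnf_norm_bound_less_1_upper_triangular[OF C] by auto
  show ?thesis
  proof
    fix k i j assume ij: "i < n" "j < n"
    have "C ^\<^sub>m k = complex_of_real (1 / s) ^ k \<cdot>\<^sub>m map_mat complex_of_real (A ^\<^sub>m k)"
      unfolding C_def pow_mat_smult[OF B] of_real_hom.mat_hom_pow[OF A] ..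
    then have "(C ^\<^sub>m k) $$ (i,j) = complex_of_real ((1 / s) ^ k * (A ^\<^sub>m k) $$ (i,j))"
      using ij A by simp
    moreover have "norm ((C ^\<^sub>m k) $$ (i,j)) \<le> c" using c ij C unfolding norm_bound_def by simp
    ultimately have "(1 / s) ^ k * (A ^\<^sub>m k) $$ (i,j) \<le> c" by (metis abs_le_D1 norm_of_real)
    then show "(A ^\<^sub>m k) $$ (i,j) \<le> c * s ^ k" using s0 by (simp add: field_simps)
  qed
qed

text \<open>The positive vector is the Neumann series \<open>\<Sum>\<^sub>k (A/r)\<^sup>k 1\<close>, for which
  \<open>A u = r (u - 1)\<close>.\<close>
lemma subinvariant_if_perron_root_less:
  fixes A :: "real mat"
  assumes A: "A \<in> carrier_mat n n" and n: "0 < n" and nn: "nonneg_mat A"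
    and r: "perron_root A < r"
  obtains u where "strictly_subinvariant A r u"
proof -
  have Ak: "0 \<le> (A ^\<^sub>m k) $$ (i,j)" if "i < n" "j < n" for i j k
    using nonneg_matD[OF pow_carrier_mat[OF A] nonneg_mat_pow[OF A nn]] that by auto
  define s where "s = (perron_root A + r) / 2"
  have s: "perron_root A < s" "s < r" "0 < s" using perron_root_nonneg[OF A n] r unfolding s_def by auto
  obtain c where c: "\<And>k i j. i < n \<Longrightarrow> j < n \<Longrightarrow> (A ^\<^sub>m k) $$ (i,j) \<le> c * s ^ k"
    using mat_pow_entries_le_if_perron_root_less[OF A n s(1)] by blast
  define f where "f i k = (\<Sum>j<n. (A ^\<^sub>m k) $$ (i,j)) / r ^ k" for i k
  have f0: "0 \<le> f i k" if "i < n" for i k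
    unfolding f_def using Ak that s by (intro divide_nonneg_pos sum_nonneg) auto
  have summable: "summable (f i)" if i: "i < n" for i
  proof (rule summable_comparison_test)
    show "\<exists>N. \<forall>k\<ge>N. norm (f i k) \<le> real n * c * (s / r) ^ k"
    proof (intro exI allI impI)
      fix k
      have "norm (f i k) = (\<Sum>j<n. (A ^\<^sub>m k) $$ (i,j)) / r ^ k"
        using f0[OF i, of k] unfolding f_def by (simp only: real_norm_def abs_of_nonneg)
      also have "\<dots> \<le> (\<Sum>j<n. c * s ^ k) / r ^ k" using c i s by (intro divide_right_mono sum_mono) auto
      also have "\<dots> = real n * c * (s / r) ^ k" by (simp add: power_divide)
      finally show "norm (f i k) \<le> real n * c * (s / r) ^ k" .
    qed
    show "summable (\<lambda>k. real n * c * (s / r) ^ k)" using s by (intro summable_mult summable_geometric) auto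
  qed
  then have summable_Suc: "summable (\<lambda>k. f i (Suc k))" if "i < n" for i
    using that by (simp add: summable_Suc_iff)
  define u where "u i = suminf (f i)" for i
  have "f i 0 = 1" if "i < n" for i
  proof -
    have "(\<Sum>j<n. (A ^\<^sub>m 0) $$ (i,j)) = (\<Sum>j<n. if i = j then 1 else 0)"
      using A that by (intro sum.cong) auto
    then show ?thesis using that unfolding f_def by simp
  qed
  then have u_split: "u i = 1 + (\<Sum>k. f i (Suc k))" if "i < n" for i
    using suminf_split_head[OF summable[OF that]] that unfolding u_def by simp
  have row_sums: "(\<Sum>j<n. A $$ (i,j) * u j) = r * (\<Sum>k. f i (Suc k))" if i: "i < n" for i
  proof -
    have "(\<Sum>j<n. A $$ (i,j) * u j) = (\<Sum>j<n. \<Sum>k. A $$ (i,j) * f j k)"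
      unfolding u_def by (intro sum.cong refl suminf_mult[symmetric] summable) auto
    also have "\<dots> = (\<Sum>k. \<Sum>j<n. A $$ (i,j) * f j k)"
      by (intro suminf_sum[symmetric] summable_mult summable) auto
    also have "\<dots> = (\<Sum>k. r * f i (Suc k))"
    proof (intro suminf_cong)
      fix k
      have "(\<Sum>j<n. A $$ (i,j) * f j k) = (\<Sum>l<n. \<Sum>j<n. A $$ (i,j) * (A ^\<^sub>m k) $$ (j,l)) / r ^ k"
        unfolding f_def by (subst sum.swap) (simp add: sum_divide_distrib sum_distrib_left)
      also have "\<dots> = (\<Sum>l<n. (A ^\<^sub>m Suc k) $$ (i,l)) / r ^ k"
        unfolding pow_mat_Suc_left[OF A] using index_mult_mat_lessThan[OF A pow_carrier_mat[OF A] i] by simp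
      also have "\<dots> = r * f i (Suc k)" unfolding f_def using s by (simp add: field_simps)
      finally show "(\<Sum>j<n. A $$ (i,j) * f j k) = r * f i (Suc k)" .
    qed
    also have "\<dots> = r * (\<Sum>k. f i (Suc k))" by (intro suminf_mult summable_Suc i)
    finally show ?thesis .
  qed
  have tail_nonneg: "0 \<le> (\<Sum>k. f i (Suc k))" if "i < n" for i
    using summable_Suc[OF that] f0[OF that] by (intro suminf_nonneg) auto
  have "strictly_subinvariant A r u"
    unfolding strictly_subinvariant_def
  proof (intro allI impI conjI)
    fix i assume "i < dim_row A"
    then have i: "i < n" using A by simp
    show "0 < u i" using u_split[OF i] tail_nonneg[OF i] by simp
    show "(\<Sum>j<dim_col A. A $$ (i,j) * u j) < r * u i"
      using row_sums[OF i] u_split[OF i] A s by (simp add: algebra_simps)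
  qed
  then show ?thesis ..
qed

lemma perron_root_less_iff_subinvariant:
  assumes "A \<in> carrier_mat n n" "0 < n" "nonneg_mat A"
  shows "perron_root A < r \<longleftrightarrow> (\<exists>u. strictly_subinvariant A r u)"
  using perron_root_less_if_subinvariant[OF assms] subinvariant_if_perron_root_less[OF assms]
  by metis


section \<open>The stochastic complement of the last state\<close>

text \<open>\<open>1 - S\<close> is the Schur complement of the last diagonal entry of \<open>1 - M\<close>.\<close>
definition stochastic_complement :: "real mat \<Rightarrow> nat \<Rightarrow> real mat" where
  "stochastic_complement M n =
     mat n n (\<lambda>(i,j). M $$ (i,j) + M $$ (i,n) * M $$ (n,j) / (1 - M $$ (n,n)))"

lemma stochastic_complement_carrier: "stochastic_complement M n \<in> carrier_mat n n"
  by (simp add: stochastic_complement_def)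

lemma index_stochastic_complement:
  "i < n \<Longrightarrow> j < n \<Longrightarrow>
     stochastic_complement M n $$ (i,j) = M $$ (i,j) + M $$ (i,n) * M $$ (n,j) / (1 - M $$ (n,n))"
  by (simp add: stochastic_complement_def)

lemma nonneg_stochastic_complement:
  assumes M: "M \<in> carrier_mat (Suc n) (Suc n)" and nn: "nonneg_mat M" and d: "M $$ (n,n) < 1"
  shows "nonneg_mat (stochastic_complement M n)"
  unfolding nonneg_mat_def
proof (intro allI impI)
  fix i j assume "i < dim_row (stochastic_complement M n)" "j < dim_col (stochastic_complement M n)"
  then have ij: "i < n" "j < n" by (simp_all add: stochastic_complement_def)
  show "0 \<le> stochastic_complement M n $$ (i,j)"
    unfolding index_stochastic_complement[OF ij] using nonneg_matD[OF M nn] ij d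
    by (intro add_nonneg_nonneg divide_nonneg_pos mult_nonneg_nonneg) auto
qed

lemma row_sum_stochastic_complement:
  assumes "i < n" and "M $$ (n,n) < 1"
  shows "(\<Sum>j<n. stochastic_complement M n $$ (i,j) * u j)
     = (\<Sum>j<n. M $$ (i,j) * u j) + M $$ (i,n) * ((\<Sum>j<n. M $$ (n,j) * u j) / (1 - M $$ (n,n)))"
  using assms
  by (simp add: index_stochastic_complement algebra_simps sum.distrib sum_distrib_left sum_divide_distrib)

lemma subinvariant_stochastic_complement:
  assumes M: "M \<in> carrier_mat (Suc n) (Suc n)" and nn: "nonneg_mat M" and d: "M $$ (n,n) < 1"
    and r: "1 \<le> r" and sub: "strictly_subinvariant M r u"
  shows "strictly_subinvariant (stochastic_complement M n) ((r - M $$ (n,n)) / (1 - M $$ (n,n)) * r) u"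
proof -
  define \<kappa> where "\<kappa> = (r - M $$ (n,n)) / (1 - M $$ (n,n))"
  have \<kappa>: "1 \<le> \<kappa>" using r d unfolding \<kappa>_def by (simp add: field_simps)
  note u = strictly_subinvariantD[OF M sub]
  have D: "0 < 1 - M $$ (n,n)" using d by simp
  have "(\<Sum>j<n. M $$ (n,j) * u j) + M $$ (n,n) * u n < r * u n" using u(2)[of n] by simp
  then have "(\<Sum>j<n. M $$ (n,j) * u j) < (r - M $$ (n,n)) * u n" by (simp add: algebra_simps)
  then have "(\<Sum>j<n. M $$ (n,j) * u j) / (1 - M $$ (n,n)) \<le> (r - M $$ (n,n)) * u n / (1 - M $$ (n,n))"
    using D by (intro divide_right_mono) auto
  then have cn: "(\<Sum>j<n. M $$ (n,j) * u j) / (1 - M $$ (n,n)) \<le> \<kappa> * u n"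
    unfolding \<kappa>_def by simp
  have "(\<Sum>j<n. stochastic_complement M n $$ (i,j) * u j) < \<kappa> * r * u i" if i: "i < n" for i
  proof -
    let ?a = "\<Sum>j<n. M $$ (i,j) * u j"
    have a: "0 \<le> ?a"
      using nonneg_matD[OF M nn] u(1)[THEN less_imp_le] i by (intro sum_nonneg mult_nonneg_nonneg) auto
    have "(\<Sum>j<n. stochastic_complement M n $$ (i,j) * u j)
        \<le> ?a + M $$ (i,n) * (\<kappa> * u n)"
      unfolding row_sum_stochastic_complement[OF i d]
      using mult_left_mono[OF cn nonneg_matD[OF M nn]] i by simp
    also have "\<dots> \<le> \<kappa> * (?a + M $$ (i,n) * u n)"
      using a \<kappa> mult_right_mono[of 1 \<kappa> ?a] by (simp add: distrib_left)
    also have "\<dots> < \<kappa> * (r * u i)" using u(2)[of i] i \<kappa> by simp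
    finally show ?thesis by simp
  qed
  then show ?thesis
    using u(1) unfolding strictly_subinvariant_def \<kappa>_def
    by (simp add: stochastic_complement_carrier[THEN carrier_matD(1)] stochastic_complement_carrier[THEN carrier_matD(2)])
qed

text \<open>A subinvariant vector of the complement is extended at the last state by
  its forced value \<open>(\<Sum>\<^sub>j M\<^sub>n\<^sub>j u\<^sub>j) / (1 - M\<^sub>n\<^sub>n)\<close> plus a slack \<open>\<epsilon>\<close> small enough
  not to spoil the strict inequalities in the other rows.\<close>
lemma subinvariant_of_stochastic_complement:
  assumes M: "M \<in> carrier_mat (Suc n) (Suc n)" and n: "0 < n" and nn: "nonneg_mat M"
    and d: "M $$ (n,n) < 1" and sr: "1 \<le> s" "s \<le> r"
    and sub: "strictly_subinvariant (stochastic_complement M n) s u"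
  obtains v where "strictly_subinvariant M r v"
proof -
  let ?S = "stochastic_complement M n"
  note u = strictly_subinvariantD[OF stochastic_complement_carrier sub]
  have D: "0 < 1 - M $$ (n,n)" using d by simp
  define c where "c = (\<Sum>j<n. M $$ (n,j) * u j) / (1 - M $$ (n,n))"
  have c: "0 \<le> c"
    unfolding c_def using nonneg_matD[OF M nn] u(1)[THEN less_imp_le] D
    by (intro divide_nonneg_pos sum_nonneg mult_nonneg_nonneg) auto
  define gap where "gap i = s * u i - (\<Sum>j<n. ?S $$ (i,j) * u j)" for i
  have Min: "0 \<le> M $$ (i,n)" if "i < n" for i using nonneg_matD[OF M nn] that by auto
  define \<epsilon> where "\<epsilon> = Min ((\<lambda>i. gap i / (M $$ (i,n) + 1)) ` {..<n})"
  have \<epsilon>: "0 < \<epsilon>" unfolding \<epsilon>_def gap_def using n u(2) Min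
    by (subst Min_gr_iff) (auto intro!: divide_pos_pos add_nonneg_pos)
  have \<epsilon>_gap: "M $$ (i,n) * \<epsilon> < gap i" if i: "i < n" for i
  proof -
    have "\<epsilon> \<le> gap i / (M $$ (i,n) + 1)" unfolding \<epsilon>_def using i by (intro Min_le) auto
    then have "(M $$ (i,n) + 1) * \<epsilon> \<le> gap i" using Min[OF i] by (simp add: field_simps)
    then show ?thesis using \<epsilon> by (simp add: algebra_simps)
  qed
  define v where "v j = (if j < n then u j else c + \<epsilon>)" for j
  have v_pos: "0 < v i" if "i < Suc n" for i using that u(1) c \<epsilon> unfolding v_def by auto
  have row_sum: "(\<Sum>j<Suc n. M $$ (i,j) * v j) = (\<Sum>j<n. M $$ (i,j) * u j) + M $$ (i,n) * (c + \<epsilon>)"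
    for i unfolding v_def by simp
  have "(\<Sum>j<Suc n. M $$ (i,j) * v j) < r * v i" if i: "i < Suc n" for i
  proof (cases "i = n")
    case True
    have "(\<Sum>j<n. M $$ (n,j) * u j) + M $$ (n,n) * (c + \<epsilon>) = (c + \<epsilon>) - (1 - M $$ (n,n)) * \<epsilon>"
      unfolding c_def using D by (simp add: field_simps)
    also have "\<dots> < c + \<epsilon>" using D \<epsilon> by simp
    also have "\<dots> \<le> r * (c + \<epsilon>)" using c \<epsilon> sr by simp
    finally show ?thesis using True row_sum unfolding v_def by simp
  next
    case False
    then have i': "i < n" using i by simp
    have "(\<Sum>j<Suc n. M $$ (i,j) * v j) = (\<Sum>j<n. ?S $$ (i,j) * u j) + M $$ (i,n) * \<epsilon>"
      unfolding row_sum row_sum_stochastic_complement[OF i' d] c_def by (simp add: algebra_simps)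
    also have "\<dots> < s * u i" using \<epsilon>_gap[OF i'] unfolding gap_def by simp
    also have "\<dots> \<le> r * u i" using sr u(1)[OF i'] by simp
    finally show ?thesis unfolding v_def using i' by simp
  qed
  then have "strictly_subinvariant M r v" using M v_pos unfolding strictly_subinvariant_def by auto
  then show ?thesis ..
qed

theorem perron_root_stochastic_complement:
  assumes M: "M \<in> carrier_mat (Suc n) (Suc n)" and n: "0 < n" and nn: "nonneg_mat M"
    and d: "M $$ (n,n) < 1"
  shows "perron_root (stochastic_complement M n) < 1 \<longleftrightarrow> perron_root M < 1"
    and "perron_root (stochastic_complement M n) \<le> 1 \<longleftrightarrow> perron_root M \<le> 1"
proof -
  let ?S = "stochastic_complement M n" and ?d = "M $$ (n,n)"
  note S = stochastic_complement_carrier[of M n]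
  note S_iff = perron_root_less_iff_subinvariant[OF S n nonneg_stochastic_complement[OF M nn d]]
  note M_iff = perron_root_less_iff_subinvariant[OF M zero_less_Suc nn]
  have S_less: "perron_root ?S < (r - ?d) / (1 - ?d) * r" if "perron_root M < r" "1 \<le> r" for r
    using that subinvariant_stochastic_complement[OF M nn d] S_iff M_iff by blast
  have M_less: "perron_root M < r" if "perron_root ?S < s" "1 \<le> s" "s \<le> r" for s r
    using that subinvariant_of_stochastic_complement[OF M n nn d] S_iff M_iff by metis
  show "perron_root ?S < 1 \<longleftrightarrow> perron_root M < 1"
    using S_less[of 1] M_less[of 1 1] d by auto
  show "perron_root ?S \<le> 1 \<longleftrightarrow> perron_root M \<le> 1"
  proof
    assume S_le: "perron_root ?S \<le> 1"
    show "perron_root M \<le> 1"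
    proof (rule ccontr)
      assume "\<not> perron_root M \<le> 1"
      then show False
        using M_less[of "(3 + perron_root M) / 4" "(1 + perron_root M) / 2"] S_le by auto
    qed
  next
    assume M_le: "perron_root M \<le> 1"
    have "((\<lambda>r. (r - ?d) / (1 - ?d) * r) \<longlongrightarrow> (1 - ?d) / (1 - ?d) * 1) (at_right 1)"
      by (intro tendsto_intros) (use d in auto)
    then have lim: "((\<lambda>r. (r - ?d) / (1 - ?d) * r) \<longlongrightarrow> 1) (at_right 1)" using d by simp
    have "eventually (\<lambda>r. perron_root ?S \<le> (r - ?d) / (1 - ?d) * r) (at_right (1::real))"
      using eventually_at_right_less[of 1]
      by eventually_elim (use S_less M_le in \<open>auto intro: less_imp_le\<close>)
    then show "perron_root ?S \<le> 1"
      by (rule tendsto_le[OF trivial_limit_at_right_real lim tendsto_const])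
  qed
qed


section \<open>Taboo sums over jump paths\<close>

definition holding_transform :: "('s \<Rightarrow> 's \<Rightarrow> real) \<Rightarrow> real \<Rightarrow> 's \<Rightarrow> real" where
  "holding_transform q lam z = - q z z / (lam - q z z)"

fun jump_weight :: "('s \<Rightarrow> 's \<Rightarrow> real) \<Rightarrow> real \<Rightarrow> 's \<Rightarrow> 's list \<Rightarrow> 's \<Rightarrow> real" where
  "jump_weight q lam u [] v = jump_prob q u v"
| "jump_weight q lam u (z # zs) v = jump_prob q u z * holding_transform q lam z * jump_weight q lam z zs v"

definition avoiding :: "'s set \<Rightarrow> 's list set" where
  "avoiding A = {zs. \<forall>z\<in>set zs. z \<notin> A}"

definition taboo_sum :: "('s \<Rightarrow> 's \<Rightarrow> real) \<Rightarrow> real \<Rightarrow> 's \<Rightarrow> 's set \<Rightarrow> 's \<Rightarrow> ennreal" where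
  "taboo_sum q lam u A v = (\<integral>\<^sup>+ zs. ennreal (jump_weight q lam u zs v) \<partial>count_space (avoiding A))"

lemma path_weight_eq_jump_weight: "path_weight q u zs v lam = jump_weight q lam u zs v"
proof (induct zs arbitrary: u)
  case Nil
  show ?case by (simp add: path_weight_def)
next
  case (Cons z zs)
  let ?p = "u # (z # zs) @ [v]" and ?p' = "z # zs @ [v]"
  let ?G = "\<lambda>z. - q z z / (lam - q z z)"
  have "length ?p - 1 = Suc (length ?p' - 1)" by simp
  then have jumps: "(\<Prod>i<length ?p - 1. jump_prob q (?p ! i) (?p ! Suc i))
      = jump_prob q u z * (\<Prod>i<length ?p' - 1. jump_prob q (?p' ! i) (?p' ! Suc i))"
    by (simp only: prod.lessThan_Suc_shift nth_Cons_Suc nth_Cons_0 append_Cons)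
  have "path_weight q u (z # zs) v lam
      = (\<Prod>i<length ?p - 1. jump_prob q (?p ! i) (?p ! Suc i)) * (?G z * (\<Prod>z\<leftarrow>zs. ?G z))"
    by (simp only: path_weight_def Let_def prod_list.Cons list.map)
  also have "\<dots> = jump_prob q u z * ?G z * path_weight q z zs v lam"
    unfolding jumps path_weight_def Let_def by (simp only: mult_ac)
  finally show ?case unfolding Cons jump_weight.simps holding_transform_def .
qed

lemma taboo_Fstar_eq_taboo_sum:
  "taboo_Fstar q H u v lam = enn2real (taboo_sum q lam u (insert v H) v)"
proof -
  have "{zs. \<forall>z\<in>set zs. z \<notin> H \<and> z \<noteq> v} = avoiding (insert v H)" by (auto simp: avoiding_def)
  then show ?thesis unfolding taboo_Fstar_def taboo_sum_def path_weight_eq_jump_weight by simp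
qed

lemma jump_weight_append:
  "jump_weight q lam u (as @ z # bs) v = jump_weight q lam u as z * holding_transform q lam z * jump_weight q lam z bs v"
  by (induct as arbitrary: u) (auto simp: algebra_simps)

lemma conservative_QD:
  assumes "conservative_Q q"
  shows "a \<noteq> b \<Longrightarrow> 0 \<le> q a b" and "q a a < 0"
  using assms unfolding conservative_Q_def by auto

lemma jump_prob_nonneg:
  assumes "conservative_Q q"
  shows "0 \<le> jump_prob q a b"
proof (cases "a = b")
  case False
  then have "0 \<le> q a b / (- q a a)" using conservative_QD[OF assms] by (intro divide_nonneg_pos) auto
  then show ?thesis using False unfolding jump_prob_def by simp
qed (simp add: jump_prob_def)

lemma holding_transform_pos:
  assumes "conservative_Q q" "0 \<le> lam"
  shows "0 < holding_transform q lam z"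
  using conservative_QD(2)[OF assms(1), of z] assms(2) by (simp add: holding_transform_def divide_simps)

lemma holding_transform_le_1:
  assumes "conservative_Q q" "0 \<le> lam"
  shows "holding_transform q lam z \<le> 1"
  using conservative_QD(2)[OF assms(1), of z] assms(2) by (simp add: holding_transform_def divide_simps)

lemma jump_weight_nonneg:
  assumes "conservative_Q q" "0 \<le> lam"
  shows "0 \<le> jump_weight q lam u zs v"
  by (induct zs arbitrary: u)
    (auto intro!: mult_nonneg_nonneg jump_prob_nonneg[OF assms(1)] less_imp_le[OF holding_transform_pos[OF assms]])

lemma nn_integral_count_space_image_pair:
  fixes F :: "'a \<Rightarrow> 'b \<Rightarrow> 'c" and h :: "'c \<Rightarrow> ennreal"
  assumes inj: "inj_on (\<lambda>(a,b). F a b) (X \<times> Y)"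
  shows "(\<integral>\<^sup>+ w. h w \<partial>count_space ((\<lambda>(a,b). F a b) ` (X \<times> Y)))
       = (\<integral>\<^sup>+ a. (\<integral>\<^sup>+ b. h (F a b) \<partial>count_space Y) \<partial>count_space X)"
proof -
  have "(\<integral>\<^sup>+ w. h w \<partial>count_space ((\<lambda>(a,b). F a b) ` (X \<times> Y)))
      = (\<integral>\<^sup>+ p. h ((\<lambda>(a,b). F a b) p) * indicator (X \<times> Y) p \<partial>count_space UNIV)"
    by (subst nn_integral_bij_count_space[symmetric, OF inj_on_imp_bij_betw[OF inj]])
      (simp add: nn_integral_count_space_indicator)
  also have "\<dots> = (\<integral>\<^sup>+ a. \<integral>\<^sup>+ b. h (F a b) * indicator (X \<times> Y) (a,b) \<partial>count_space UNIV \<partial>count_space UNIV)"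
    by (subst nn_integral_fst_count_space[symmetric]) simp
  also have "\<dots> = (\<integral>\<^sup>+ a. (\<integral>\<^sup>+ b. h (F a b) * indicator Y b \<partial>count_space UNIV) * indicator X a \<partial>count_space UNIV)"
    by (intro nn_integral_cong) (auto simp: indicator_def)
  finally show ?thesis by (simp add: nn_integral_count_space_indicator)
qed

lemma nn_integral_count_space_Un:
  fixes h :: "'c \<Rightarrow> ennreal"
  assumes "S \<inter> T = {}"
  shows "(\<integral>\<^sup>+ w. h w \<partial>count_space (S \<union> T)) = (\<integral>\<^sup>+ w. h w \<partial>count_space S) + (\<integral>\<^sup>+ w. h w \<partial>count_space T)"
proof -
  have "(\<integral>\<^sup>+ w. h w \<partial>count_space (S \<union> T))
      = (\<integral>\<^sup>+ w. h w * indicator S w + h w * indicator T w \<partial>count_space UNIV)"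
    using assms by (subst nn_integral_count_space_indicator) (auto intro!: nn_integral_cong simp: indicator_def)
  also have "\<dots> = (\<integral>\<^sup>+ w. h w * indicator S w \<partial>count_space UNIV) + (\<integral>\<^sup>+ w. h w * indicator T w \<partial>count_space UNIV)"
    by (rule nn_integral_add) auto
  finally show ?thesis by (simp add: nn_integral_count_space_indicator)
qed

lemma nn_integral_count_space_mono_set:
  fixes h :: "'c \<Rightarrow> ennreal"
  assumes "S \<subseteq> T"
  shows "(\<integral>\<^sup>+ w. h w \<partial>count_space S) \<le> (\<integral>\<^sup>+ w. h w \<partial>count_space T)"
proof -
  have "(\<integral>\<^sup>+ w. h w * indicator S w \<partial>count_space UNIV) \<le> (\<integral>\<^sup>+ w. h w * indicator T w \<partial>count_space UNIV)"
    using assms by (intro nn_integral_mono) (auto simp: indicator_def)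
  then show ?thesis by (simp add: nn_integral_count_space_indicator)
qed

lemma append_Cons_eq_append_Cons_first:
  "z \<notin> set a \<Longrightarrow> z \<notin> set c \<Longrightarrow> a @ z # b = c @ z # d \<Longrightarrow> a = c \<and> b = d"
proof (induct a arbitrary: c)
  case Nil then show ?case by (cases c) auto
next
  case (Cons x a) then show ?case by (cases c) auto
qed

lemma avoiding_first_visit:
  assumes "z \<notin> A"
  shows "avoiding A = avoiding (insert z A) \<union> (\<lambda>(as,bs). as @ z # bs) ` (avoiding (insert z A) \<times> avoiding A)"
    and "avoiding (insert z A) \<inter> (\<lambda>(as,bs). as @ z # bs) ` (avoiding (insert z A) \<times> avoiding A) = {}"
    and "inj_on (\<lambda>(as,bs). as @ z # bs) (avoiding (insert z A) \<times> avoiding A)"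
proof -
  show "avoiding A = avoiding (insert z A) \<union> (\<lambda>(as,bs). as @ z # bs) ` (avoiding (insert z A) \<times> avoiding A)"
  proof (intro equalityI subsetI)
    fix zs assume zs: "zs \<in> avoiding A"
    show "zs \<in> avoiding (insert z A) \<union> (\<lambda>(as,bs). as @ z # bs) ` (avoiding (insert z A) \<times> avoiding A)"
    proof (cases "z \<in> set zs")
      case True
      then obtain as bs where "zs = as @ z # bs" "z \<notin> set as" using split_list_first by metis
      then show ?thesis using zs unfolding avoiding_def by (auto intro!: image_eqI[where x = "(as, bs)"])
    next
      case False then show ?thesis using zs unfolding avoiding_def by auto
    qed
  qed (use assms in \<open>auto simp: avoiding_def\<close>)
  show "avoiding (insert z A) \<inter> (\<lambda>(as,bs). as @ z # bs) ` (avoiding (insert z A) \<times> avoiding A) = {}"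
    unfolding avoiding_def by auto
  show "inj_on (\<lambda>(as,bs). as @ z # bs) (avoiding (insert z A) \<times> avoiding A)"
  proof (rule inj_onI)
    fix p p' assume "p \<in> avoiding (insert z A) \<times> avoiding A" "p' \<in> avoiding (insert z A) \<times> avoiding A"
      and "(\<lambda>(as,bs). as @ z # bs) p = (\<lambda>(as,bs). as @ z # bs) p'"
    then show "p = p'"
      using append_Cons_eq_append_Cons_first[of z "fst p" "fst p'" "snd p" "snd p'"]
      by (auto simp: avoiding_def split: prod.splits)
  qed
qed

lemma taboo_sum_first_visit:
  assumes cq: "conservative_Q q" and lam: "0 \<le> lam" and z: "z \<notin> A"
  shows "taboo_sum q lam u A v = taboo_sum q lam u (insert z A) v
    + taboo_sum q lam u (insert z A) z * ennreal (holding_transform q lam z) * taboo_sum q lam z A v"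
proof -
  note split = avoiding_first_visit[OF z]
  let ?w = "\<lambda>u zs v. ennreal (jump_weight q lam u zs v)"
  have "taboo_sum q lam u A v = taboo_sum q lam u (insert z A) v +
     (\<integral>\<^sup>+ zs. ?w u zs v \<partial>count_space ((\<lambda>(as,bs). as @ z # bs) ` (avoiding (insert z A) \<times> avoiding A)))"
    unfolding taboo_sum_def by (subst split(1)) (rule nn_integral_count_space_Un[OF split(2)])
  also have "(\<integral>\<^sup>+ zs. ?w u zs v \<partial>count_space ((\<lambda>(as,bs). as @ z # bs) ` (avoiding (insert z A) \<times> avoiding A)))
     = (\<integral>\<^sup>+ as. (\<integral>\<^sup>+ bs. ?w u (as @ z # bs) v \<partial>count_space (avoiding A)) \<partial>count_space (avoiding (insert z A)))"
    by (rule nn_integral_count_space_image_pair[OF split(3)])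
  also have "\<dots> = (\<integral>\<^sup>+ as. ?w u as z * (ennreal (holding_transform q lam z) * taboo_sum q lam z A v)
      \<partial>count_space (avoiding (insert z A)))"
  proof (intro nn_integral_cong)
    fix as
    have "(\<integral>\<^sup>+ bs. ?w u (as @ z # bs) v \<partial>count_space (avoiding A))
        = (\<integral>\<^sup>+ bs. (?w u as z * ennreal (holding_transform q lam z)) * ?w z bs v \<partial>count_space (avoiding A))"
      unfolding jump_weight_append
      using jump_weight_nonneg[OF cq lam] holding_transform_pos[OF cq lam]
      by (intro nn_integral_cong) (simp add: ennreal_mult less_imp_le)
    also have "\<dots> = ?w u as z * (ennreal (holding_transform q lam z) * taboo_sum q lam z A v)"
      unfolding taboo_sum_def by (subst nn_integral_cmult) (auto simp: mult.assoc)
    finally show "(\<integral>\<^sup>+ bs. ?w u (as @ z # bs) v \<partial>count_space (avoiding A))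
        = ?w u as z * (ennreal (holding_transform q lam z) * taboo_sum q lam z A v)" .
  qed
  also have "\<dots> = taboo_sum q lam u (insert z A) z * (ennreal (holding_transform q lam z) * taboo_sum q lam z A v)"
    unfolding taboo_sum_def by (subst nn_integral_multc) auto
  finally show ?thesis by (simp add: mult.assoc)
qed

lemma nn_integral_jump_prob:
  assumes cq: "conservative_Q q"
  shows "(\<integral>\<^sup>+ y. ennreal (jump_prob q u y) \<partial>count_space UNIV) = 1"
proof -
  have h0: "(q u has_sum 0) UNIV" using cq unfolding conservative_Q_def by auto
  have "q u summable_on UNIV" using h0 unfolding summable_on_def by blast
  then have sm: "q u summable_on (UNIV - {u})" by (rule summable_on_subset_banach) simp
  have "(q u has_sum (q u u + infsum (q u) (UNIV - {u}))) (insert u (UNIV - {u}))"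
    by (rule has_sum_insert) (simp, rule has_sum_infsum[OF sm])
  then have "q u u + infsum (q u) (UNIV - {u}) = 0"
    using h0 has_sum_unique by (metis insert_Diff_single insert_UNIV)
  then have "(q u has_sum (- q u u)) (UNIV - {u})" using sm has_sum_infsum by (metis add_eq_0_iff)
  from has_sum_divide_const[OF this, of "- q u u"]
  have "((\<lambda>y. q u y / (- q u u)) has_sum 1) (UNIV - {u})"
    using conservative_QD(2)[OF cq, of u] by simp
  then have "(jump_prob q u has_sum 1) (UNIV - {u})"
    by (rule iffD1[OF has_sum_cong, rotated]) (auto simp: jump_prob_def)
  then have "(jump_prob q u has_sum (jump_prob q u u + 1)) (insert u (UNIV - {u}))"
    by (rule has_sum_insert[rotated]) simp
  then have sum1: "(jump_prob q u has_sum 1) UNIV" by (simp add: jump_prob_def insert_UNIV)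
  have nn: "\<And>y. 0 \<le> jump_prob q u y" using jump_prob_nonneg[OF cq] .
  then have "Infinite_Sum.abs_summable_on (jump_prob q u) UNIV"
    using sum1 unfolding summable_on_def by (simp add: abs_of_nonneg) blast
  then have as: "Infinite_Set_Sum.abs_summable_on (jump_prob q u) UNIV"
    using abs_summable_equivalent by blast
  have "(\<integral>\<^sup>+ y. ennreal (jump_prob q u y) \<partial>count_space UNIV) = ennreal (infsetsum (jump_prob q u) UNIV)"
    by (rule nn_integral_conv_infsetsum[OF as nn])
  also have "\<dots> = 1" using infsetsum_infsum[OF as] infsumI[OF sum1] by simp
  finally show ?thesis .
qed

definition taboo_sum_below :: "('s \<Rightarrow> 's \<Rightarrow> real) \<Rightarrow> real \<Rightarrow> 's \<Rightarrow> 's set \<Rightarrow> 's \<Rightarrow> nat \<Rightarrow> ennreal" where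
  "taboo_sum_below q lam u A v n =
     (\<integral>\<^sup>+ zs. ennreal (jump_weight q lam u zs v) \<partial>count_space {zs \<in> avoiding A. length zs < n})"

lemma avoiding_length_less_Suc:
  "{zs \<in> avoiding A. length zs < Suc n}
     = {[]} \<union> (\<lambda>(y,ys). y # ys) ` ((- A) \<times> {zs \<in> avoiding A. length zs < n})"
proof (intro equalityI subsetI)
  fix zs assume zs: "zs \<in> {zs \<in> avoiding A. length zs < Suc n}"
  show "zs \<in> {[]} \<union> (\<lambda>(y,ys). y # ys) ` ((- A) \<times> {zs \<in> avoiding A. length zs < n})"
  proof (cases zs)
    case (Cons y ys)
    then show ?thesis using zs unfolding avoiding_def by (auto intro!: image_eqI[where x = "(y, ys)"])
  qed simp
qed (auto simp: avoiding_def)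

lemma taboo_sum_below_Suc:
  assumes cq: "conservative_Q q" and lam: "0 \<le> lam"
  shows "taboo_sum_below q lam u A v (Suc n) = ennreal (jump_prob q u v) +
    (\<integral>\<^sup>+ y. ennreal (jump_prob q u y * holding_transform q lam y) * taboo_sum_below q lam y A v n
      \<partial>count_space (- A))"
proof -
  let ?w = "\<lambda>u zs v. ennreal (jump_weight q lam u zs v)"
  have inj: "inj_on (\<lambda>(y,ys). y # ys) ((- A) \<times> {zs \<in> avoiding A. length zs < n})"
    by (auto simp: inj_on_def)
  have "taboo_sum_below q lam u A v (Suc n) = (\<integral>\<^sup>+ zs. ?w u zs v \<partial>count_space {[]}) +
     (\<integral>\<^sup>+ zs. ?w u zs v \<partial>count_space ((\<lambda>(y,ys). y # ys) ` ((- A) \<times> {zs \<in> avoiding A. length zs < n})))"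
    unfolding taboo_sum_below_def avoiding_length_less_Suc by (rule nn_integral_count_space_Un) auto
  also have "(\<integral>\<^sup>+ zs. ?w u zs v \<partial>count_space {[]}) = ennreal (jump_prob q u v)"
    by (subst nn_integral_count_space_finite) auto
  also have "(\<integral>\<^sup>+ zs. ?w u zs v \<partial>count_space ((\<lambda>(y,ys). y # ys) ` ((- A) \<times> {zs \<in> avoiding A. length zs < n})))
     = (\<integral>\<^sup>+ y. (\<integral>\<^sup>+ ys. ?w u (y # ys) v \<partial>count_space {zs \<in> avoiding A. length zs < n}) \<partial>count_space (- A))"
    by (rule nn_integral_count_space_image_pair[OF inj])
  also have "\<dots> = (\<integral>\<^sup>+ y. ennreal (jump_prob q u y * holding_transform q lam y) * taboo_sum_below q lam y A v n
      \<partial>count_space (- A))"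
    unfolding taboo_sum_below_def jump_weight.simps
    using jump_weight_nonneg[OF cq lam] holding_transform_pos[OF cq lam] jump_prob_nonneg[OF cq]
    by (subst nn_integral_cmult[symmetric]) (auto intro!: nn_integral_cong simp: ennreal_mult less_imp_le)
  finally show ?thesis .
qed

lemma sum_taboo_sum_below_le_1:
  assumes cq: "conservative_Q q" and lam: "0 \<le> lam" and T: "finite T" "T \<subseteq> A"
  shows "(\<Sum>t\<in>T. taboo_sum_below q lam u A t n) \<le> 1"
proof (induct n arbitrary: u)
  case 0
  show ?case by (simp add: taboo_sum_below_def nn_integral_count_space_finite)
next
  case (Suc n)
  let ?P = "\<lambda>y. ennreal (jump_prob q u y)" and ?g = "holding_transform q lam"
  have "(\<Sum>t\<in>T. taboo_sum_below q lam u A t (Suc n)) = (\<Sum>t\<in>T. ?P t) +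
     (\<Sum>t\<in>T. \<integral>\<^sup>+ y. ennreal (jump_prob q u y * ?g y) * taboo_sum_below q lam y A t n \<partial>count_space (- A))"
    unfolding taboo_sum_below_Suc[OF cq lam] by (rule sum.distrib)
  also have "(\<Sum>t\<in>T. \<integral>\<^sup>+ y. ennreal (jump_prob q u y * ?g y) * taboo_sum_below q lam y A t n \<partial>count_space (- A))
      = (\<integral>\<^sup>+ y. ennreal (jump_prob q u y * ?g y) * (\<Sum>t\<in>T. taboo_sum_below q lam y A t n) \<partial>count_space (- A))"
    by (subst nn_integral_sum[symmetric]) (auto simp: sum_distrib_left)
  also have "\<dots> \<le> (\<integral>\<^sup>+ y. ?P y \<partial>count_space (- A))"
  proof (intro nn_integral_mono)
    fix y
    have "ennreal (jump_prob q u y * ?g y) * (\<Sum>t\<in>T. taboo_sum_below q lam y A t n)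
        \<le> ennreal (jump_prob q u y * ?g y) * 1"
      by (intro mult_left_mono Suc) auto
    also have "\<dots> \<le> ?P y"
      using holding_transform_le_1[OF cq lam, of y] jump_prob_nonneg[OF cq, of u y]
      by (simp add: ennreal_leI mult_left_le)
    finally show "ennreal (jump_prob q u y * ?g y) * (\<Sum>t\<in>T. taboo_sum_below q lam y A t n) \<le> ?P y" .
  qed
  also have "(\<Sum>t\<in>T. ?P t) = (\<integral>\<^sup>+ y. ?P y \<partial>count_space T)"
    by (rule nn_integral_count_space_finite[OF T(1), symmetric])
  finally have "(\<Sum>t\<in>T. taboo_sum_below q lam u A t (Suc n))
      \<le> (\<integral>\<^sup>+ y. ?P y \<partial>count_space T) + (\<integral>\<^sup>+ y. ?P y \<partial>count_space (- A))"
    by (simp add: add_left_mono)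
  also have "\<dots> = (\<integral>\<^sup>+ y. ?P y \<partial>count_space (T \<union> - A))"
    by (rule nn_integral_count_space_Un[symmetric]) (use T in auto)
  also have "\<dots> \<le> (\<integral>\<^sup>+ y. ?P y \<partial>count_space UNIV)" by (rule nn_integral_count_space_mono_set) simp
  also have "\<dots> = 1" by (rule nn_integral_jump_prob[OF cq])
  finally show ?case .
qed

lemma taboo_sum_eq_SUP_below:
  "taboo_sum q lam u A v = (SUP n. taboo_sum_below q lam u A v n)"
proof -
  let ?w = "\<lambda>zs. ennreal (jump_weight q lam u zs v)"
  let ?f = "\<lambda>n zs. ?w zs * indicator {zs \<in> avoiding A. length zs < n} zs"
  have inc: "incseq ?f" by (auto simp: incseq_def le_fun_def indicator_def)
  have "taboo_sum q lam u A v = (\<integral>\<^sup>+ zs. ?w zs * indicator (avoiding A) zs \<partial>count_space UNIV)"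
    unfolding taboo_sum_def by (simp add: nn_integral_count_space_indicator)
  also have "\<dots> = (\<integral>\<^sup>+ zs. (SUP n. ?f n zs) \<partial>count_space UNIV)"
  proof (intro nn_integral_cong)
    fix zs
    show "?w zs * indicator (avoiding A) zs = (SUP n. ?f n zs)"
    proof (rule antisym)
      have "?w zs * indicator (avoiding A) zs = ?f (Suc (length zs)) zs"
        by (simp add: indicator_def)
      also have "\<dots> \<le> (SUP n. ?f n zs)" by (rule SUP_upper) simp
      finally show "?w zs * indicator (avoiding A) zs \<le> (SUP n. ?f n zs)" .
      show "(SUP n. ?f n zs) \<le> ?w zs * indicator (avoiding A) zs"
        by (rule SUP_least) (auto simp: indicator_def)
    qed
  qed
  also have "\<dots> = (SUP n. (\<integral>\<^sup>+ zs. ?f n zs \<partial>count_space UNIV))"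
    by (rule nn_integral_monotone_convergence_SUP[OF inc]) auto
  also have "\<dots> = (SUP n. taboo_sum_below q lam u A v n)"
    unfolding taboo_sum_below_def by (simp add: nn_integral_count_space_indicator)
  finally show ?thesis .
qed

lemma incseq_taboo_sum_below: "incseq (taboo_sum_below q lam u A v)"
  unfolding incseq_def taboo_sum_below_def by (auto intro!: nn_integral_count_space_mono_set)

text \<open>The paths to distinct targets are disjoint events of the embedded jump chain; since the
  taboo sums are defined as series, this is shown by first-step analysis on truncations.\<close>
lemma sum_taboo_sum_le_1:
  assumes cq: "conservative_Q q" and lam: "0 \<le> lam" and T: "finite T" "T \<subseteq> A"
  shows "(\<Sum>t\<in>T. taboo_sum q lam u A t) \<le> 1"
proof -
  have "(\<Sum>t\<in>T. taboo_sum q lam u A t) = (SUP n. \<Sum>t\<in>T. taboo_sum_below q lam u A t n)"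
    unfolding taboo_sum_eq_SUP_below by (rule ennreal_SUP_sum[symmetric]) (rule incseq_taboo_sum_below)
  also have "\<dots> \<le> 1" by (rule SUP_least) (rule sum_taboo_sum_below_le_1[OF cq lam T])
  finally show ?thesis .
qed

lemma taboo_sum_real:
  assumes cq: "conservative_Q q" and lam: "0 \<le> lam" and t: "t \<in> A"
  shows "taboo_sum q lam u A t = ennreal (enn2real (taboo_sum q lam u A t))"
proof -
  have "taboo_sum q lam u A t \<le> 1" using sum_taboo_sum_le_1[OF cq lam, of "{t}" A u] t by simp
  then have "taboo_sum q lam u A t < \<infinity>" by (rule le_less_trans) simp
  then show ?thesis by simp
qed

lemma enn2real_taboo_sum_first_visit:
  assumes cq: "conservative_Q q" and lam: "0 \<le> lam" and z: "z \<notin> A" and v: "v \<in> A"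
  shows "enn2real (taboo_sum q lam u A v) = enn2real (taboo_sum q lam u (insert z A) v)
     + enn2real (taboo_sum q lam u (insert z A) z) * holding_transform q lam z
       * enn2real (taboo_sum q lam z A v)"
proof -
  define a b c g where "a = enn2real (taboo_sum q lam u (insert z A) v)"
    and "b = enn2real (taboo_sum q lam u (insert z A) z)"
    and "c = enn2real (taboo_sum q lam z A v)" and "g = holding_transform q lam z"
  have nonneg: "0 \<le> a" "0 \<le> b" "0 \<le> c" "0 \<le> g"
    unfolding a_def b_def c_def g_def using holding_transform_pos[OF cq lam] by (auto intro: less_imp_le)
  have "taboo_sum q lam u A v = ennreal a + ennreal b * ennreal g * ennreal c"
    unfolding taboo_sum_first_visit[OF cq lam z, of u v] a_def b_def c_def g_def
    using v by (subst (1 2 3) taboo_sum_real[OF cq lam]) auto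
  also have "\<dots> = ennreal (a + b * g * c)" using nonneg by (simp add: ennreal_mult)
  finally have "enn2real (taboo_sum q lam u A v) = enn2real (ennreal (a + b * g * c))" by (simp only:)
  also have "\<dots> = a + b * g * c" by (rule enn2real_ennreal) (use nonneg in simp)
  finally show ?thesis unfolding a_def b_def c_def g_def .
qed

lemma reachable_imp_avoiding_path:
  assumes cq: "conservative_Q q" and lam: "0 \<le> lam"
    and ab: "(a, b) \<in> {(c, d). c \<noteq> d \<and> q c d > 0}\<^sup>*" and b: "b \<in> V"
  shows "a \<in> V \<or> (\<exists>t\<in>V. \<exists>zs\<in>avoiding V. 0 < jump_weight q lam a zs t)"
  using ab
proof (induct rule: converse_rtrancl_induct)
  case base
  then show ?case using b by simp
next
  case (step a c)
  then have "a \<noteq> c" "0 < q a c" by auto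
  then have Pac: "0 < jump_prob q a c"
    using conservative_QD(2)[OF cq, of a] unfolding jump_prob_def by (simp add: divide_pos_neg)
  show ?case
  proof (cases "c \<in> V")
    case True
    then show ?thesis using Pac by (intro disjI2 bexI[of _ c] bexI[of _ "[]"]) (auto simp: avoiding_def)
  next
    case False
    show ?thesis
    proof (cases "a \<in> V")
      case False
      from step(3) \<open>c \<notin> V\<close> obtain t zs where t: "t \<in> V" "zs \<in> avoiding V" "0 < jump_weight q lam c zs t"
        by auto
      have "0 < jump_weight q lam a (c # zs) t" using Pac t(3) holding_transform_pos[OF cq lam, of c] by simp
      moreover have "c # zs \<in> avoiding V" using t(2) \<open>c \<notin> V\<close> by (simp add: avoiding_def)
      ultimately show ?thesis using t(1) by blast
    qed simp
  qed
qed

text \<open>Cutting a path at its last visit to \<open>z\<close> shows that the chain started at \<open>z\<close>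
  enters \<open>V\<close> before returning to \<open>z\<close> with positive weight.\<close>
lemma taboo_sum_exit_pos:
  assumes cq: "conservative_Q q" and irr: "irreducible_Q q" and lam: "0 \<le> lam"
    and z: "z \<notin> V" and V: "w0 \<in> V"
  obtains w where "w \<in> V" "0 < taboo_sum q lam z (insert z V) w"
proof -
  have "(z, w0) \<in> {(c, d). c \<noteq> d \<and> q c d > 0}\<^sup>*" using irr unfolding irreducible_Q_def by blast
  from reachable_imp_avoiding_path[OF cq lam this V] z
  obtain t zs where t: "t \<in> V" "zs \<in> avoiding V" "0 < jump_weight q lam z zs t"
    by auto
  obtain bs where bs: "bs \<in> avoiding (insert z V)" "0 < jump_weight q lam z bs t"
  proof (cases "z \<in> set zs")
    case True
    then obtain as bs where zs: "zs = as @ z # bs" "z \<notin> set bs" using split_list_last by metis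
    then have "jump_weight q lam z bs t \<noteq> 0" using t(3) by (auto simp: jump_weight_append)
    then have "0 < jump_weight q lam z bs t" using jump_weight_nonneg[OF cq lam, of z bs t] by simp
    moreover have "bs \<in> avoiding (insert z V)" using t(2) zs unfolding avoiding_def by auto
    ultimately show ?thesis using that by blast
  next
    case False
    then show ?thesis using that t unfolding avoiding_def by auto
  qed
  have "0 < ennreal (jump_weight q lam z bs t)" using bs(2) by simp
  also have "\<dots> \<le> taboo_sum q lam z (insert z V) t"
    unfolding taboo_sum_def by (rule nn_integral_ge_point[OF bs(1)])
  finally show ?thesis using that t(1) by blast
qed

lemma return_weight_less_1:
  assumes cq: "conservative_Q q" and irr: "irreducible_Q q" and lam: "0 \<le> lam"
    and z: "z \<notin> V" and V: "w0 \<in> V"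
  shows "holding_transform q lam z * enn2real (taboo_sum q lam z (insert z V) z) < 1"
proof -
  obtain w where w: "w \<in> V" "0 < taboo_sum q lam z (insert z V) w"
    using taboo_sum_exit_pos[OF assms] by blast
  define a b where "a = enn2real (taboo_sum q lam z (insert z V) z)"
    and "b = enn2real (taboo_sum q lam z (insert z V) w)"
  have ea: "taboo_sum q lam z (insert z V) z = ennreal a"
    unfolding a_def by (rule taboo_sum_real[OF cq lam]) simp
  have eb: "taboo_sum q lam z (insert z V) w = ennreal b"
    unfolding b_def by (rule taboo_sum_real[OF cq lam]) (simp add: w(1))
  have nonneg: "0 \<le> a" "0 \<le> b" unfolding a_def b_def by auto
  have "z \<noteq> w" using w z by auto
  then have "taboo_sum q lam z (insert z V) z + taboo_sum q lam z (insert z V) w \<le> 1"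
    using sum_taboo_sum_le_1[OF cq lam, of "{z, w}" "insert z V" z] w(1) by simp
  then have "a + b \<le> 1" unfolding ea eb ennreal_plus[OF nonneg, symmetric] by (simp only: ennreal_le_1)
  moreover have "0 < b" using w(2) unfolding eb by (simp only: ennreal_less_zero_iff)
  moreover have "holding_transform q lam z * a \<le> a"
    using holding_transform_le_1[OF cq lam, of z] nonneg mult_right_mono[of _ 1 a] by simp
  ultimately show ?thesis unfolding a_def by simp
qed


section \<open>Adding a state to the catalysts\<close>

lemma D_mat_carrier: "D_mat q n v alpha m G lam \<in> carrier_mat n n"
  by (simp add: D_mat_def)

lemma index_D_mat:
  assumes "i < n" "j < n"
  shows "D_mat q n v alpha m G lam $$ (i,j) = (if i = j then alpha i * m i * G i lam else 0)
      + (1 - alpha i) * G i lam * enn2real (taboo_sum q lam (v i) (v ` {..<n}) (v j))"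
proof -
  have "insert (v j) (v ` {..<n} - {v j}) = v ` {..<n}" using assms by auto
  then show ?thesis using assms by (simp add: D_mat_def taboo_Fstar_eq_taboo_sum)
qed

lemma nonneg_D_mat:
  assumes "\<And>i. i < n \<Longrightarrow> 0 \<le> alpha i \<and> alpha i \<le> 1 \<and> 0 \<le> m i \<and> 0 \<le> G i lam"
  shows "nonneg_mat (D_mat q n v alpha m G lam)"
  unfolding nonneg_mat_def
proof (intro allI impI)
  fix i j assume "i < dim_row (D_mat q n v alpha m G lam)" "j < dim_col (D_mat q n v alpha m G lam)"
  then have ij: "i < n" "j < n" by (simp_all add: D_mat_def)
  show "0 \<le> D_mat q n v alpha m G lam $$ (i,j)"
    unfolding index_D_mat[OF ij] using assms[OF ij(1)]
    by (intro add_nonneg_nonneg mult_nonneg_nonneg) auto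
qed

lemma index_D_mat_Suc:
  assumes "i < Suc n" "j < Suc n"
  shows "D_mat q (Suc n) v alpha m G lam $$ (i,j) = (if i = j then alpha i * m i * G i lam else 0)
      + (1 - alpha i) * G i lam * enn2real (taboo_sum q lam (v i) (insert (v n) (v ` {..<n})) (v j))"
proof -
  have "v ` {..<Suc n} = insert (v n) (v ` {..<n})" by (simp add: lessThan_Suc)
  then show ?thesis using index_D_mat[OF assms, of q v alpha m G lam] by simp
qed

lemma D_mat_Suc_last_less_1:
  assumes cq: "conservative_Q q" and irr: "irreducible_Q q" and lam: "0 \<le> lam"
    and inj: "inj_on v {..<Suc n}" and n: "0 < n"
    and alpha_n: "alpha n = 0" and G_n: "G n lam = holding_transform q lam (v n)"
  shows "D_mat q (Suc n) v alpha m G lam $$ (n,n) < 1"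
proof -
  have "v n \<notin> v ` {..<n}" using inj_on_image_mem_iff[OF inj, of n "{..<n}"] by auto
  from return_weight_less_1[OF cq irr lam this, of "v 0"]
  show ?thesis using index_D_mat_Suc[of n n n q v alpha m G lam] alpha_n G_n n by simp
qed

lemma D_mat_eq_stochastic_complement:
  assumes cq: "conservative_Q q" and irr: "irreducible_Q q" and lam: "0 \<le> lam"
    and inj: "inj_on v {..<Suc n}" and n: "0 < n"
    and alpha_n: "alpha n = 0" and G_n: "G n lam = holding_transform q lam (v n)"
  shows "D_mat q n v alpha m G lam = stochastic_complement (D_mat q (Suc n) v alpha m G lam) n"
proof (rule eq_matI)
  let ?M = "D_mat q (Suc n) v alpha m G lam" and ?V = "v ` {..<n}" and ?z = "v n"
  let ?F = "\<lambda>u A t. enn2real (taboo_sum q lam u A t)" and ?g = "holding_transform q lam (v n)"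
  note index_M = index_D_mat_Suc[where q = q and v = v and alpha = alpha and m = m and G = G and lam = lam]
  fix i j assume "i < dim_row (stochastic_complement ?M n)" "j < dim_col (stochastic_complement ?M n)"
  then have i: "i < n" and j: "j < n" using stochastic_complement_carrier[of ?M n] by auto
  have z: "?z \<notin> ?V" using inj_on_image_mem_iff[OF inj, of n "{..<n}"] by auto
  have vj: "v j \<in> ?V" using j by auto
  have d: "?g * ?F ?z (insert ?z ?V) ?z < 1"
    using D_mat_Suc_last_less_1[where alpha = alpha and m = m and G = G and lam = lam, OF assms]
      index_M[of n n n] alpha_n G_n by simp
  have "?F ?z ?V (v j) = ?F ?z (insert ?z ?V) (v j) + ?F ?z (insert ?z ?V) ?z * ?g * ?F ?z ?V (v j)"
    by (rule enn2real_taboo_sum_first_visit[OF cq lam z vj])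
  then have from_z: "?F ?z ?V (v j) = ?F ?z (insert ?z ?V) (v j) / (1 - ?g * ?F ?z (insert ?z ?V) ?z)"
    using d by (simp add: field_simps)
  have M_ij: "?M $$ (i,j) = (if i = j then alpha i * m i * G i lam else 0)
      + (1 - alpha i) * G i lam * ?F (v i) (insert ?z ?V) (v j)"
    using index_M[of i n j] i j by simp
  have M_in: "?M $$ (i,n) = (1 - alpha i) * G i lam * ?F (v i) (insert ?z ?V) ?z"
    using index_M[of i n n] i by simp
  have M_nj: "?M $$ (n,j) = ?g * ?F ?z (insert ?z ?V) (v j)"
    using index_M[of n n j] j alpha_n G_n by simp
  have M_nn: "?M $$ (n,n) = ?g * ?F ?z (insert ?z ?V) ?z"
    using index_M[of n n n] alpha_n G_n by simp
  show "D_mat q n v alpha m G lam $$ (i,j) = stochastic_complement ?M n $$ (i,j)"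
    unfolding index_D_mat[OF i j] index_stochastic_complement[OF i j] M_ij M_in M_nj M_nn
      enn2real_taboo_sum_first_visit[OF cq lam z vj, of "v i"] from_z
    using d by (simp add: field_simps)
qed (simp_all add: D_mat_def stochastic_complement_def)

theorem perron_root_D_mat_Suc:
  assumes cq: "conservative_Q q" and irr: "irreducible_Q q" and lam: "0 \<le> lam"
    and inj: "inj_on v {..<Suc n}" and n: "0 < n"
    and alpha_n: "alpha n = 0" and G_n: "G n lam = holding_transform q lam (v n)"
    and par: "\<And>i. i < Suc n \<Longrightarrow> 0 \<le> alpha i \<and> alpha i \<le> 1 \<and> 0 \<le> m i \<and> 0 \<le> G i lam"
  shows "perron_root (D_mat q n v alpha m G lam) < 1 \<longleftrightarrow> perron_root (D_mat q (Suc n) v alpha m G lam) < 1"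
    and "perron_root (D_mat q n v alpha m G lam) \<le> 1 \<longleftrightarrow> perron_root (D_mat q (Suc n) v alpha m G lam) \<le> 1"
  using perron_root_stochastic_complement[OF D_mat_carrier n nonneg_D_mat[of "Suc n" alpha m G lam, OF par]
      D_mat_Suc_last_less_1[where alpha = alpha and m = m and G = G and lam = lam, OF cq irr lam inj n alpha_n G_n]]
  unfolding D_mat_eq_stochastic_complement[where alpha = alpha and m = m and G = G and lam = lam, OF cq irr lam inj n alpha_n G_n]
  by blast+

theorem lemma3:
  fixes q :: "'s::countable \<Rightarrow> 's \<Rightarrow> real"
    and N :: nat and w :: "nat \<Rightarrow> 's"
    and alpha beta :: "nat \<Rightarrow> real" and f :: "nat \<Rightarrow> nat pmf"
    and x y :: 's and lam :: real
  assumes "conservative_Q q" and "irreducible_Q q"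
    and "N \<ge> 1" and "inj_on w {..<N}"
    and "\<forall>k<N. beta k > 0"
    and "\<forall>k<N. 0 \<le> alpha k \<and> alpha k < 1"
    and "\<forall>k<N. integrable (measure_pmf (f k)) real"
    and "x \<notin> w ` {..<N}" and "y \<notin> w ` {..<N}" and "y \<noteq> x"
    and "lam \<ge> 0"
  defines "w' \<equiv> w(N := x, Suc N := y)"
    and "alpha' \<equiv> alpha(N := 0, Suc N := 0)"
    and "m' \<equiv> (\<lambda>k. if k < N then gf_deriv1 (f k) else 0)"
    and "G' \<equiv> (\<lambda>k l. if k < N then beta k / (l + beta k)
                 else if k = N then - q x x / (l - q x x)
                 else - q y y / (l - q y y))"
  shows "(perron_root (D_mat q N w' alpha' m' G' lam) > 1 \<and>
          perron_root (D_mat q (Suc N) w' alpha' m' G' lam) > 1 \<and>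
          perron_root (D_mat q (Suc (Suc N)) w' alpha' m' G' lam) > 1) \<or>
         (perron_root (D_mat q N w' alpha' m' G' lam) = 1 \<and>
          perron_root (D_mat q (Suc N) w' alpha' m' G' lam) = 1 \<and>
          perron_root (D_mat q (Suc (Suc N)) w' alpha' m' G' lam) = 1) \<or>
         (perron_root (D_mat q N w' alpha' m' G' lam) < 1 \<and>
          perron_root (D_mat q (Suc N) w' alpha' m' G' lam) < 1 \<and>
          perron_root (D_mat q (Suc (Suc N)) w' alpha' m' G' lam) < 1)"
proof -
  have cq: "conservative_Q q" and irr: "irreducible_Q q" and lam: "0 \<le> lam" using assms by auto
  have inj: "inj_on w' {..<Suc (Suc N)}"
    using assms(4,8,9,10) unfolding w'_def inj_on_def by (auto simp: less_Suc_eq)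
  have par: "0 \<le> alpha' i \<and> alpha' i \<le> 1 \<and> 0 \<le> m' i \<and> 0 \<le> G' i lam" if "i < Suc (Suc N)" for i
  proof (cases "i < N")
    case True
    then show ?thesis
      using assms(5,6) lam unfolding alpha'_def m'_def G'_def gf_deriv1_def
      by (auto intro!: Bochner_Integration.integral_nonneg divide_nonneg_pos)
  next
    case False
    then show ?thesis
      using that holding_transform_pos[OF cq lam, of x] holding_transform_pos[OF cq lam, of y]
      unfolding alpha'_def m'_def G'_def holding_transform_def by (auto simp: less_Suc_eq less_imp_le)
  qed
  have G'_N: "G' N lam = holding_transform q lam (w' N)"
    and G'_Suc_N: "G' (Suc N) lam = holding_transform q lam (w' (Suc N))"
    unfolding G'_def w'_def holding_transform_def by simp_all
  have alpha'_N: "alpha' N = 0" and alpha'_Suc_N: "alpha' (Suc N) = 0"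
    unfolding alpha'_def by simp_all
  have N: "0 < N" using assms(3) by simp
  have inj_x: "inj_on w' {..<Suc N}" by (rule inj_on_subset[OF inj]) auto
  have par_x: "0 \<le> alpha' i \<and> alpha' i \<le> 1 \<and> 0 \<le> m' i \<and> 0 \<le> G' i lam" if "i < Suc N" for i
    using par that by simp
  from perron_root_D_mat_Suc[where alpha = alpha' and m = m' and G = G' and lam = lam,
      OF cq irr lam inj_x N alpha'_N G'_N par_x]
  have add_x: "perron_root (D_mat q N w' alpha' m' G' lam) < 1 \<longleftrightarrow> perron_root (D_mat q (Suc N) w' alpha' m' G' lam) < 1"
    "perron_root (D_mat q N w' alpha' m' G' lam) \<le> 1 \<longleftrightarrow> perron_root (D_mat q (Suc N) w' alpha' m' G' lam) \<le> 1"
    by simp_all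
  from perron_root_D_mat_Suc[where alpha = alpha' and m = m' and G = G' and lam = lam,
      OF cq irr lam inj zero_less_Suc alpha'_Suc_N G'_Suc_N par]
  have add_y: "perron_root (D_mat q (Suc N) w' alpha' m' G' lam) < 1 \<longleftrightarrow> perron_root (D_mat q (Suc (Suc N)) w' alpha' m' G' lam) < 1"
    "perron_root (D_mat q (Suc N) w' alpha' m' G' lam) \<le> 1 \<longleftrightarrow> perron_root (D_mat q (Suc (Suc N)) w' alpha' m' G' lam) \<le> 1"
    by simp_all
  show ?thesis using add_x add_y by linarith
qed

end
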